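(* Let $\tau(t)$ be a tau function of the KP hierarchy, $n\ge1$, and $\alpha_1,\dots,\alpha_n$ nonzero distinct complex numbers. Put $f(t,\alpha,\beta)=\frac{\tau(t+[\beta]-[\alpha])}{\beta-\alpha}$ and, for $|\beta|<|\alpha|$, expand $f(t,\alpha,\beta)=\sum_{j\ge0}f_j(t,\alpha)\beta^j$. Let $D=\det\big(f(t,\alpha_j,\beta_i)\big)_{1\le i,j\le n}$ and $F=D/\prod_{1\le i<j\le n}(\beta_j-\beta_i)$, which extends holomorphically to $\beta_i=0$. Define $F_0=F$ and $F_k=F_{k-1}|_{\beta_k=0}$ for $1\le k\le n$. Let $\mathcal B_k=\prod_{k\le i<j\le n}(\beta_j-\beta_i)$ for $1\le k\le n-1$ and $\mathcal B_n=\mathcal B_{n+1}=1$. Then for $1\le k\le n$, $$F_k=\frac{D_k}{\mathcal B_{k+1}\prod_{j=k+1}^n\beta_j^k},$$ where $D_k$ is the $n\times n$ determinant whose $(i,j)$ entry is $f_{i-1}(t,\alpha_j)$ for $1\le i\le k$ and $f(t,\alpha_j,\beta_i)$ for $k+1\le i\le n$ (the empty product for $k=n$ being $1$). In particular $F_n=\det\big(f_{i-1}(t,\alpha_j)\big)_{1\le i,j\le n}$.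
   Context: Let $t=(t_1,t_2,t_3,\dots)$ be infinitely many variables. For a complex number $z$ put $[z]=(z,z^2/2,z^3/3,\dots)$ and $\eta(t,z)=\sum_{j\ge1}t_jz^j$. A tau function of the KP hierarchy is a nonzero function $\tau(t)$ satisfying the bilinear identity $\mathrm{res}_{z=0}\,\tau(t-s-[z])\tau(t+s+[z])e^{-2\eta(s,z^{-1})}\frac{dz}{z^2}=0$ for all $s=(s_1,s_2,\dots)$. *)

theory Defs
  imports "HOL-Complex_Analysis.Complex_Analysis" "Jordan_Normal_Form.Determinant"
begin

text \<open>Times t = (t_1, t_2, ...) are encoded as t :: nat => complex with t j = t_(j+1).\<close>

definition kp_bracket :: "complex \<Rightarrow> nat \<Rightarrow> complex" where
  "kp_bracket z = (\<lambda>j. z ^ Suc j / of_nat (Suc j))"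

definition kp_eta :: "(nat \<Rightarrow> complex) \<Rightarrow> complex \<Rightarrow> complex" where
  "kp_eta s z = (\<Sum>j. s j * z ^ Suc j)"

text \<open>KP tau function: nonzero, and the bilinear residue identity holds
  (for all finitely supported s, where eta(s, 1/z) is a finite sum).\<close>
definition KP_tau :: "((nat \<Rightarrow> complex) \<Rightarrow> complex) \<Rightarrow> bool" where
  "KP_tau tau \<longleftrightarrow> (\<exists>t. tau t \<noteq> 0) \<and>
     (\<forall>t s. finite {j. s j \<noteq> 0} \<longrightarrow>
        residue (\<lambda>z. tau (\<lambda>j. t j - s j - kp_bracket z j) * tau (\<lambda>j. t j + s j + kp_bracket z j)
                      * exp (- 2 * kp_eta s (1 / z)) / z ^ 2) 0 = 0)"

definition kp_f :: "((nat \<Rightarrow> complex) \<Rightarrow> complex) \<Rightarrow> (nat \<Rightarrow> complex) \<Rightarrow> complex \<Rightarrow> complex \<Rightarrow> complex" where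
  "kp_f tau t a b = tau (\<lambda>j. t j + kp_bracket b j - kp_bracket a j) / (b - a)"

definition kp_fcoef :: "((nat \<Rightarrow> complex) \<Rightarrow> complex) \<Rightarrow> (nat \<Rightarrow> complex) \<Rightarrow> nat \<Rightarrow> complex \<Rightarrow> complex" where
  "kp_fcoef tau t m a = (deriv ^^ m) (kp_f tau t a) 0 / fact m"

text \<open>All indices are 0-based: alpha_(j+1) = al j, beta_(i+1) = b i.\<close>
definition kp_D :: "((nat \<Rightarrow> complex) \<Rightarrow> complex) \<Rightarrow> (nat \<Rightarrow> complex) \<Rightarrow> (nat \<Rightarrow> complex) \<Rightarrow> nat \<Rightarrow> (nat \<Rightarrow> complex) \<Rightarrow> complex" where
  "kp_D tau t al n b = det (mat n n (\<lambda>(i, j). kp_f tau t (al j) (b i)))"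

text \<open>kp_B k b = prod over k <= i < j < n of (b j - b i)  (paper's B_(k+1)).\<close>
definition kp_B :: "nat \<Rightarrow> nat \<Rightarrow> (nat \<Rightarrow> complex) \<Rightarrow> complex" where
  "kp_B n k b = (\<Prod>i\<in>{k..<n}. \<Prod>j\<in>{Suc i..<n}. (b j - b i))"

text \<open>F_0 = D / Vandermonde; F_(k+1) is F_k restricted to beta_(k+1) = 0, i.e. the
  limit (value of the holomorphic extension) as b k tends to 0.\<close>
fun kp_F :: "((nat \<Rightarrow> complex) \<Rightarrow> complex) \<Rightarrow> (nat \<Rightarrow> complex) \<Rightarrow> (nat \<Rightarrow> complex) \<Rightarrow> nat \<Rightarrow> nat \<Rightarrow> (nat \<Rightarrow> complex) \<Rightarrow> complex" where
  "kp_F tau t al n 0 b = kp_D tau t al n b / kp_B n 0 b"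
| "kp_F tau t al n (Suc k) b = Lim (at 0) (\<lambda>x. kp_F tau t al n k (b(k := x)))"

definition kp_Dk :: "((nat \<Rightarrow> complex) \<Rightarrow> complex) \<Rightarrow> (nat \<Rightarrow> complex) \<Rightarrow> (nat \<Rightarrow> complex) \<Rightarrow> nat \<Rightarrow> nat \<Rightarrow> (nat \<Rightarrow> complex) \<Rightarrow> complex" where
  "kp_Dk tau t al n k b = det (mat n n (\<lambda>(i, j).
      if i < k then kp_fcoef tau t i (al j) else kp_f tau t (al j) (b i)))"

end

theory Submission
  imports Defs
begin

text \<open>Put \<open>\<beta>\<^sub>k = x\<close> in the formula for \<open>F\<^sub>k\<^sub>-\<^sub>1\<close>. The first \<open>k - 1\<close> rows of
  \<open>D\<^sub>k\<^sub>-\<^sub>1\<close> are the Taylor coefficients \<open>f\<^sub>0, \<dots>, f\<^sub>k\<^sub>-\<^sub>2\<close> of its \<open>k\<close>-th row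
  \<open>f(t, \<alpha>\<^sub>j, x)\<close>, so by linearity in that row \<open>D\<^sub>k\<^sub>-\<^sub>1 / x\<^sup>k\<^sup>-\<^sup>1 \<rightarrow> D\<^sub>k\<close> as \<open>x \<rightarrow> 0\<close>.
  This cancels the factor \<open>x\<^sup>k\<^sup>-\<^sup>1\<close> of the denominator, while the Vandermonde factors
  \<open>\<beta>\<^sub>j - x\<close> tend to \<open>\<beta>\<^sub>j\<close> and raise the power of each remaining \<open>\<beta>\<^sub>j\<close> by one. Only the holomorphy of \<open>f(t, \<alpha>\<^sub>j, \<cdot>)\<close> on
  \<open>|\<beta>| < |\<alpha>\<^sub>j|\<close> is used.\<close>

lemma holomorphic_taylor_remainder_tendsto:
  fixes g :: "complex \<Rightarrow> complex"
  assumes hol: "g holomorphic_on ball 0 r" and r: "r > 0"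
  shows "((\<lambda>x. (g x - (\<Sum>m<k. (deriv ^^ m) g 0 / fact m * x ^ m)) / x ^ k)
          \<longlongrightarrow> (deriv ^^ k) g 0 / fact k) (at 0)"
proof -
  define c where "c m = (deriv ^^ m) g 0 / fact m" for m
  define P where "P x = (\<Sum>m. c (m + k) * x ^ m)" for x
  have tail_sums: "(\<lambda>m. c (m + k) * w ^ m) sums ((g w - (\<Sum>m<k. c m * w ^ m)) / w ^ k)"
    if w: "w \<in> ball 0 r" "w \<noteq> 0" for w
  proof -
    have "(\<lambda>m. c m * w ^ m) sums g w"
      using holomorphic_power_series[OF hol w(1)] by (simp add: c_def)
    then have "(\<lambda>m. c (m + k) * w ^ (m + k)) sums (g w - (\<Sum>m<k. c m * w ^ m))"
      using sums_iff_shift[of "\<lambda>m. c m * w ^ m" k] by simp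
    from sums_divide[OF this, of "w ^ k"] show ?thesis
      using w(2) by (simp add: power_add)
  qed
  define w0 where "w0 = complex_of_real (r / 2)"
  have w0: "w0 \<in> ball 0 r" "w0 \<noteq> 0"
    using r by (auto simp: w0_def)
  have "isCont P 0"
    unfolding P_def
    by (rule isCont_powser[of _ w0]) (use tail_sums[OF w0] w0(2) in \<open>auto simp: sums_iff\<close>)
  moreover have "P 0 = c k"
    unfolding P_def using powser_zero[of "\<lambda>m. c (m + k)"] by simp
  ultimately have "(P \<longlongrightarrow> c k) (at 0)"
    by (simp add: isCont_def)
  moreover have "eventually (\<lambda>x. P x = (g x - (\<Sum>m<k. c m * x ^ m)) / x ^ k) (at 0)"
    unfolding eventually_at using r
    by (intro exI[of _ r]) (auto simp: P_def dist_norm tail_sums[THEN sums_unique])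
  ultimately show ?thesis
    unfolding c_def using tendsto_cong by fastforce
qed

lemma det_mat_linear_in_row:
  fixes E :: "nat \<Rightarrow> nat \<Rightarrow> 'a::comm_ring_1"
  assumes "r < n"
  shows "det (mat n n (\<lambda>(i, j). if i = r then v j else E i j)) =
     (\<Sum>j<n. v j * cofactor (mat n n (\<lambda>(i, j). if i = r then 0 else E i j)) r j)"
proof -
  let ?A = "mat n n (\<lambda>(i, j). if i = r then v j else E i j)"
  let ?Z = "mat n n (\<lambda>(i, j). if i = r then 0 else E i j)"
  have "mat_delete ?A r j = mat_delete ?Z r j" for j
    unfolding mat_delete_def by (rule eq_matI) (use assms in auto)
  then have cofactor_eq: "cofactor ?A r j = cofactor ?Z r j" for j
    by (simp add: cofactor_def)
  have "det ?A = (\<Sum>j<n. ?A $$ (r, j) * cofactor ?A r j)"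
    by (rule laplace_expansion_row) (use assms in auto)
  also have "\<dots> = (\<Sum>j<n. v j * cofactor ?Z r j)"
    using assms by (simp add: cofactor_eq)
  finally show ?thesis .
qed

lemma det_mat_row_taylor_tendsto:
  fixes a :: "nat \<Rightarrow> nat \<Rightarrow> 'a::real_normed_field" and g :: "nat \<Rightarrow> 'a \<Rightarrow> 'a"
  assumes p: "p < n"
    and taylor: "\<And>j. j < n \<Longrightarrow>
      ((\<lambda>x. (g j x - (\<Sum>m<p. a m j * x ^ m)) / x ^ p) \<longlongrightarrow> a p j) (at 0)"
  shows "((\<lambda>x. det (mat n n (\<lambda>(i, j). if i < p then a i j else if i = p then g j x else E i j))
            / x ^ p) \<longlongrightarrow> det (mat n n (\<lambda>(i, j). if i \<le> p then a i j else E i j))) (at 0)"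
proof -
  define E' where "E' i j = (if i < p then a i j else E i j)" for i j
  define C where "C j = cofactor (mat n n (\<lambda>(i, j). if i = p then 0 else E' i j)) p j" for j
  define rem where "rem j x = (g j x - (\<Sum>m<p. a m j * x ^ m)) / x ^ p" for j x
  have expand: "det (mat n n (\<lambda>(i, j). if i = p then v j else E' i j)) = (\<Sum>j<n. v j * C j)" for v
    unfolding C_def by (rule det_mat_linear_in_row[OF p])
  have lower_rows: "(\<Sum>j<n. a m j * C j) = 0" if "m < p" for m
  proof -
    have "det (mat n n (\<lambda>(i, j). if i = p then a m j else E' i j)) = 0"
      by (rule det_identical_rows[of _ n m p]) (use that p in \<open>auto simp: E'_def\<close>)
    then show ?thesis
      by (simp add: expand)
  qed
  have "det (mat n n (\<lambda>(i, j). if i < p then a i j else if i = p then g j x else E i j)) / x ^ p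
      = (\<Sum>j<n. rem j x * C j)" for x
  proof -
    have "(\<Sum>j<n. (\<Sum>m<p. a m j * x ^ m) * C j) = (\<Sum>m<p. x ^ m * (\<Sum>j<n. a m j * C j))"
      by (simp add: sum_distrib_left sum_distrib_right sum.swap[of _ "{..<n}"] ac_simps)
    also have "\<dots> = 0"
      by (simp add: lower_rows)
    finally have taylor_part: "(\<Sum>j<n. (\<Sum>m<p. a m j * x ^ m) * C j) = 0" .
    have "det (mat n n (\<lambda>(i, j). if i < p then a i j else if i = p then g j x else E i j))
        = det (mat n n (\<lambda>(i, j). if i = p then g j x else E' i j))"
      by (rule arg_cong[where f = det], rule eq_matI) (auto simp: E'_def)
    also have "\<dots> = (\<Sum>j<n. g j x * C j) - (\<Sum>j<n. (\<Sum>m<p. a m j * x ^ m) * C j)"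
      by (simp add: expand taylor_part)
    also have "\<dots> = (\<Sum>j<n. (g j x - (\<Sum>m<p. a m j * x ^ m)) * C j)"
      by (simp add: sum_subtractf left_diff_distrib)
    finally show ?thesis
      by (simp add: rem_def sum_divide_distrib)
  qed
  moreover have "((\<lambda>x. \<Sum>j<n. rem j x * C j) \<longlongrightarrow> (\<Sum>j<n. a p j * C j)) (at 0)"
    unfolding rem_def by (intro tendsto_sum tendsto_mult_right taylor) simp
  moreover have "(\<Sum>j<n. a p j * C j) = det (mat n n (\<lambda>(i, j). if i \<le> p then a i j else E i j))"
    unfolding expand[symmetric]
    by (rule arg_cong[where f = det], rule eq_matI) (auto simp: E'_def)
  ultimately show ?thesis
    by simp
qed

definition kp_beta_admissible :: "(nat \<Rightarrow> complex) \<Rightarrow> nat \<Rightarrow> nat \<Rightarrow> (nat \<Rightarrow> complex) \<Rightarrow> bool" where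
  "kp_beta_admissible al n k b \<longleftrightarrow>
     (\<forall>i\<in>{k..<n}. b i \<noteq> 0 \<and> (\<forall>j<n. norm (b i) < norm (al j))) \<and> inj_on b {k..<n}"

definition kp_F_closed ::
  "((nat \<Rightarrow> complex) \<Rightarrow> complex) \<Rightarrow> (nat \<Rightarrow> complex) \<Rightarrow> (nat \<Rightarrow> complex) \<Rightarrow> nat \<Rightarrow> nat \<Rightarrow> (nat \<Rightarrow> complex) \<Rightarrow> complex"
  where "kp_F_closed tau t al n k b = kp_Dk tau t al n k b / (kp_B n k b * (\<Prod>j\<in>{k..<n}. b j ^ k))"

lemma kp_f_holomorphic_on_ball:
  assumes "(\<lambda>z. tau (\<lambda>i. t i + kp_bracket z i - kp_bracket a i)) holomorphic_on ball 0 (norm a)"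
  shows "kp_f tau t a holomorphic_on ball 0 (norm a)"
  unfolding kp_f_def by (intro holomorphic_intros assms) auto

lemma kp_Dk_fun_upd_div_power_tendsto:
  assumes hol: "\<And>j. j < n \<Longrightarrow> kp_f tau t (al j) holomorphic_on ball 0 (norm (al j))"
    and al0: "\<And>j. j < n \<Longrightarrow> al j \<noteq> 0" and p: "p < n"
  shows "((\<lambda>x. kp_Dk tau t al n p (b(p := x)) / x ^ p) \<longlongrightarrow> kp_Dk tau t al n (Suc p) b) (at 0)"
proof -
  have "((\<lambda>x. det (mat n n (\<lambda>(i, j). if i < p then kp_fcoef tau t i (al j)
            else if i = p then kp_f tau t (al j) x else kp_f tau t (al j) (b i))) / x ^ p)
        \<longlongrightarrow> det (mat n n (\<lambda>(i, j). if i \<le> p then kp_fcoef tau t i (al j)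
            else kp_f tau t (al j) (b i)))) (at 0)"
    by (rule det_mat_row_taylor_tendsto[OF p])
      (use holomorphic_taylor_remainder_tendsto[OF hol] al0 in \<open>simp add: kp_fcoef_def\<close>)
  moreover have "kp_Dk tau t al n p (b(p := x)) = det (mat n n (\<lambda>(i, j).
      if i < p then kp_fcoef tau t i (al j)
      else if i = p then kp_f tau t (al j) x else kp_f tau t (al j) (b i)))" for x
    unfolding kp_Dk_def by (rule arg_cong[where f = det], rule eq_matI) auto
  moreover have "kp_Dk tau t al n (Suc p) b = det (mat n n (\<lambda>(i, j).
      if i \<le> p then kp_fcoef tau t i (al j) else kp_f tau t (al j) (b i)))"
    unfolding kp_Dk_def by (simp add: less_Suc_eq_le)
  ultimately show ?thesis
    by simp
qed

lemma kp_B_fun_upd: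
  assumes "p < n"
  shows "kp_B n p (b(p := x)) = (\<Prod>j\<in>{Suc p..<n}. b j - x) * kp_B n (Suc p) b"
proof -
  have split: "{p..<n} = insert p {Suc p..<n}"
    using assms by auto
  show ?thesis
    unfolding kp_B_def split by (auto intro!: prod.cong)
qed

lemma kp_B_nonzero:
  assumes "inj_on b {k..<n}"
  shows "kp_B n k b \<noteq> 0"
proof -
  have "b j \<noteq> b i" if "i \<in> {k..<n}" "j \<in> {Suc i..<n}" for i j
    using inj_onD[OF assms, of j i] that by auto
  then show ?thesis
    unfolding kp_B_def by (simp add: prod_zero_iff)
qed

lemma kp_F_closed_fun_upd:
  assumes "p < n"
  shows "kp_F_closed tau t al n p (b(p := x)) = (kp_Dk tau t al n p (b(p := x)) / x ^ p)
     / ((\<Prod>j\<in>{Suc p..<n}. b j - x) * kp_B n (Suc p) b * (\<Prod>j\<in>{Suc p..<n}. b j ^ p))"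
proof -
  have "{p..<n} = insert p {Suc p..<n}"
    using assms by auto
  then have "(\<Prod>j\<in>{p..<n}. (b(p := x)) j ^ p) = x ^ p * (\<Prod>j\<in>{Suc p..<n}. b j ^ p)"
    by (auto intro!: prod.cong)
  then show ?thesis
    unfolding kp_F_closed_def kp_B_fun_upd[OF assms] by (simp add: ac_simps)
qed

lemma kp_F_closed_fun_upd_tendsto:
  assumes hol: "\<And>j. j < n \<Longrightarrow> kp_f tau t (al j) holomorphic_on ball 0 (norm (al j))"
    and al0: "\<And>j. j < n \<Longrightarrow> al j \<noteq> 0" and p: "p < n"
    and adm: "kp_beta_admissible al n (Suc p) b"
  shows "((\<lambda>x. kp_F_closed tau t al n p (b(p := x))) \<longlongrightarrow> kp_F_closed tau t al n (Suc p) b) (at 0)"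
proof -
  let ?B = "kp_B n (Suc p) b"
  have denominator_limit: "(\<Prod>j\<in>{Suc p..<n}. b j - 0) * ?B * (\<Prod>j\<in>{Suc p..<n}. b j ^ p)
      = ?B * (\<Prod>j\<in>{Suc p..<n}. b j ^ Suc p)"
    by (simp add: prod.distrib[symmetric] ac_simps)
  have "?B * (\<Prod>j\<in>{Suc p..<n}. b j ^ Suc p) \<noteq> 0"
    using adm kp_B_nonzero by (auto simp: kp_beta_admissible_def)
  then have "((\<lambda>x. (kp_Dk tau t al n p (b(p := x)) / x ^ p)
       / ((\<Prod>j\<in>{Suc p..<n}. b j - x) * ?B * (\<Prod>j\<in>{Suc p..<n}. b j ^ p)))
       \<longlongrightarrow> kp_Dk tau t al n (Suc p) b / (?B * (\<Prod>j\<in>{Suc p..<n}. b j ^ Suc p))) (at 0)"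
    unfolding denominator_limit[symmetric]
    by (intro tendsto_divide kp_Dk_fun_upd_div_power_tendsto[OF hol al0 p] tendsto_intros)
      (simp_all add: denominator_limit)
  then show ?thesis
    unfolding kp_F_closed_fun_upd[OF p] by (simp add: kp_F_closed_def)
qed

lemma eventually_kp_beta_admissible_fun_upd:
  assumes al0: "\<And>j. j < n \<Longrightarrow> al j \<noteq> 0" and p: "p < n"
    and adm: "kp_beta_admissible al n (Suc p) b"
  shows "eventually (\<lambda>x. kp_beta_admissible al n p (b(p := x))) (at 0)"
proof -
  have small: "eventually (\<lambda>x. norm x < norm c) (at 0)" if "c \<noteq> 0" for c :: complex
    unfolding eventually_at using that by (intro exI[of _ "norm c"]) (auto simp: dist_norm)
  have "eventually (\<lambda>x. x \<noteq> 0 \<and> (\<forall>j\<in>{..<n}. norm x < norm (al j))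
      \<and> (\<forall>i\<in>{Suc p..<n}. norm x < norm (b i))) (at 0)"
    using adm al0 small
    by (intro eventually_conj eventually_ball_finite eventually_neq_at_within)
       (auto simp: kp_beta_admissible_def)
  then show ?thesis
  proof (rule eventually_mono)
    fix x :: complex assume x: "x \<noteq> 0 \<and> (\<forall>j\<in>{..<n}. norm x < norm (al j))
      \<and> (\<forall>i\<in>{Suc p..<n}. norm x < norm (b i))"
    have split: "{p..<n} = insert p {Suc p..<n}"
      using p by auto
    have "inj_on (b(p := x)) {Suc p..<n}"
      using adm by (auto simp: kp_beta_admissible_def inj_on_def)
    moreover have "x \<notin> (b(p := x)) ` {Suc p..<n}"
      using x by force
    ultimately show "kp_beta_admissible al n p (b(p := x))"
      using x adm unfolding kp_beta_admissible_def split by auto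
  qed
qed

lemma kp_F_fun_upd_tendsto:
  assumes hol: "\<And>j. j < n \<Longrightarrow> kp_f tau t (al j) holomorphic_on ball 0 (norm (al j))"
    and al0: "\<And>j. j < n \<Longrightarrow> al j \<noteq> 0" and p: "p < n"
    and closed_form: "\<And>b. kp_beta_admissible al n p b \<Longrightarrow> kp_F tau t al n p b = kp_F_closed tau t al n p b"
    and adm: "kp_beta_admissible al n (Suc p) b"
  shows "((\<lambda>x. kp_F tau t al n p (b(p := x))) \<longlongrightarrow> kp_F_closed tau t al n (Suc p) b) (at 0)"
proof -
  from al0 p adm have "eventually (\<lambda>x. kp_beta_admissible al n p (b(p := x))) (at 0)"
    by (rule eventually_kp_beta_admissible_fun_upd)
  then have "eventually (\<lambda>x. kp_F_closed tau t al n p (b(p := x)) = kp_F tau t al n p (b(p := x))) (at 0)"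
    by (rule eventually_mono) (simp add: closed_form)
  with kp_F_closed_fun_upd_tendsto[OF hol al0 p adm] show ?thesis
    by (rule tendsto_cong[THEN iffD1, rotated])
qed

lemma kp_F_eq_kp_F_closed:
  assumes hol: "\<And>j. j < n \<Longrightarrow> kp_f tau t (al j) holomorphic_on ball 0 (norm (al j))"
    and al0: "\<And>j. j < n \<Longrightarrow> al j \<noteq> 0"
    and "k \<le> n" and "kp_beta_admissible al n k b"
  shows "kp_F tau t al n k b = kp_F_closed tau t al n k b"
  using assms(3,4)
proof (induction k arbitrary: b)
  case 0
  then show ?case
    by (simp add: kp_F_closed_def kp_Dk_def kp_D_def)
next
  case (Suc p)
  have "((\<lambda>x. kp_F tau t al n p (b(p := x))) \<longlongrightarrow> kp_F_closed tau t al n (Suc p) b) (at 0)"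
    using Suc by (intro kp_F_fun_upd_tendsto[OF hol al0]) auto
  then show ?case
    by (simp add: tendsto_Lim)
qed

theorem mainTheorem5:
  fixes tau :: "(nat \<Rightarrow> complex) \<Rightarrow> complex"
    and t :: "nat \<Rightarrow> complex" and al :: "nat \<Rightarrow> complex" and n :: nat
  assumes "KP_tau tau"
    and "n \<ge> 1"
    and "\<forall>j<n. al j \<noteq> 0"
    and "inj_on al {..<n}"
    and "\<forall>j<n. (\<lambda>z. tau (\<lambda>i. t i + kp_bracket z i - kp_bracket (al j) i)) holomorphic_on ball 0 (norm (al j))"
  shows "(\<forall>k\<in>{1..n}. \<forall>b. ((\<forall>i\<in>{k..<n}. b i \<noteq> 0 \<and> (\<forall>j<n. norm (b i) < norm (al j)))
              \<and> inj_on b {k..<n}) \<longrightarrow>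
           ((\<lambda>x. kp_F tau t al n (k - 1) (b(k - 1 := x))) \<longlongrightarrow>
              kp_Dk tau t al n k b / (kp_B n k b * (\<Prod>j\<in>{k..<n}. b j ^ k))) (at 0))
       \<and> (\<forall>b. kp_F tau t al n n b = det (mat n n (\<lambda>(i, j). kp_fcoef tau t i (al j))))"
proof -
  have hol: "\<And>j. j < n \<Longrightarrow> kp_f tau t (al j) holomorphic_on ball 0 (norm (al j))"
    using assms(5) by (simp add: kp_f_holomorphic_on_ball)
  have al0: "\<And>j. j < n \<Longrightarrow> al j \<noteq> 0"
    using assms(3) by simp
  note closed_form = kp_F_eq_kp_F_closed[where al = al and n = n, OF hol al0]
  have "((\<lambda>x. kp_F tau t al n (k - 1) (b(k - 1 := x))) \<longlongrightarrow> kp_F_closed tau t al n k b) (at 0)"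
    if "k \<in> {1..n}" "kp_beta_admissible al n k b" for k b
  proof -
    obtain p where "k = Suc p" "p < n"
      using \<open>k \<in> {1..n}\<close> by (cases k) auto
    then show ?thesis
      using kp_F_fun_upd_tendsto[OF hol al0 \<open>p < n\<close>] closed_form that by simp
  qed
  moreover have "kp_F tau t al n n b = det (mat n n (\<lambda>(i, j). kp_fcoef tau t i (al j)))" for b
  proof -
    have "kp_F tau t al n n b = kp_Dk tau t al n n b"
      using closed_form[where k = n and b = b]
      by (simp add: kp_beta_admissible_def kp_F_closed_def kp_B_def)
    also have "\<dots> = det (mat n n (\<lambda>(i, j). kp_fcoef tau t i (al j)))"
      unfolding kp_Dk_def by (rule arg_cong[where f = det], rule eq_matI) auto
    finally show ?thesis .
  qed
  ultimately show ?thesis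
    unfolding kp_beta_admissible_def kp_F_closed_def by blast
qed

end
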